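(* Let $\sigma$ be a regular expression having the HOMOGENEITY property with constant $D_\sigma$, let $C_\sigma$ be the integer such that for every $n\ge1$ the maximum number of $\sigma$-patterns among time series of length $n$ equals $\max(0,\lfloor (n-C_\sigma)/D_\sigma\rfloor)$, and let $\gamma(X,R)$ be the constraint $\mathrm{nb}\_\sigma(X,R)$. Then the gap-to-loss condition is satisfied for $\gamma$, and for every ground time series $X$ of length $n$, $$\mathrm{Loss}_\gamma(X)=\mathrm{Gap}_\gamma(X)\cdot D_\sigma+(1-\mathrm{sgn}(R))\cdot(\min(n,C_\sigma)-1)+\max(0,n-C_\sigma)\bmod D_\sigma.$$
   Context: Signature of $X=\langle X_1,\dots,X_n\rangle$: the word $\langle S_1,\dots,S_{n-1}\rangle$ over $\Sigma=\{<,=,>\}$ with $S_i$ given by comparing $X_i$ and $X_{i+1}$. For $\sigma$ with integer constants $b_\sigma,a_\sigma$, whenever $\langle S_i,\dots,S_j\rangle$ is a maximal word matching $\sigma$, $\langle X_{i+b_\sigma},\dots,X_{j+1-a_\sigma}\rangle$ is a $\sigma$-pattern; $\mathrm{nb}\_\sigma(X,R)$ holds iff $R$ is the number of $\sigma$-patterns of $X$. Ground time series: fixed non-empty integer sequence. $\mathrm{Gap}_\gamma(X)$: maximum value of $R$ over time series of length $n$ minus the value of $R$ for $X$. $\mathrm{Loss}_\gamma(X)$: $n$ minus the length of a shortest time series with the same value of $R$. $\mathrm{sgn}$: signum. Gap-to-loss condition: there is a function $h$ with $\mathrm{Loss}_\gamma(X)=h(\mathrm{Gap}_\gamma(X),\mathrm{sgn}(R),n)$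 for all ground $X$ of length $n$. Seed transducer for $\sigma$: a deterministic finite transducer whose transitions are labelled by an input symbol in $\Sigma$ and an output symbol in $\{\mathtt{found},\mathtt{not\_found}\}$, such that on the signature of any time series the $\mathtt{found}$ outputs correspond bijectively to the $\sigma$-patterns (each $\mathtt{found}$ marks the discovery of a new maximal occurrence of $\sigma$). A $\mathtt{found}$-transition is one with output $\mathtt{found}$; a $\mathtt{found}$-path is a sequence of consecutive transitions containing at least one $\mathtt{found}$-transition, its length being its number of transitions. HOMOGENEITY property: (1) a seed transducer $T_\sigma$ for $\sigma$ exists (the paper phrases this as $\langle\sigma,b_\sigma\rangle$ being a recognisable pattern); (2) for every state of $T_\sigma$ that is the destination of a $\mathtt{found}$-transition, the length of the shortest $\mathtt{found}$-path starting from it is the same constant, denoted $D_\sigma$. *)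

theory Defs
  imports Main
begin

datatype sym = Lt | Eq | Gt

definition cmp :: "int \<Rightarrow> int \<Rightarrow> sym" where
  "cmp a b = (if a < b then Lt else if a = b then Eq else Gt)"

definition signature :: "int list \<Rightarrow> sym list" where
  "signature X = map2 cmp X (tl X)"

datatype rexp = Zero | One | Atom sym | Alt rexp rexp | Conc rexp rexp | Star rexp

inductive_set star_lang :: "sym list set \<Rightarrow> sym list set" for A where
  star_nil: "[] \<in> star_lang A"
| star_app: "u \<in> A \<Longrightarrow> v \<in> star_lang A \<Longrightarrow> u @ v \<in> star_lang A"

fun lang :: "rexp \<Rightarrow> sym list set" where
  "lang Zero = {}"
| "lang One = {[]}"
| "lang (Atom s) = {[s]}"
| "lang (Alt r1 r2) = lang r1 \<union> lang r2"
| "lang (Conc r1 r2) = {u @ v | u v. u \<in> lang r1 \<and> v \<in> lang r2}"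
| "lang (Star r) = star_lang (lang r)"

definition occ :: "rexp \<Rightarrow> sym list \<Rightarrow> (nat \<times> nat) set" where
  "occ \<sigma> w = {(i, j). i \<le> j \<and> j < length w \<and> take (j - i + 1) (drop i w) \<in> lang \<sigma>}"

definition max_occ :: "rexp \<Rightarrow> sym list \<Rightarrow> (nat \<times> nat) set" where
  "max_occ \<sigma> w = {(i, j). (i, j) \<in> occ \<sigma> w \<and>
      (\<forall>i' j'. (i', j') \<in> occ \<sigma> w \<and> i' \<le> i \<and> j \<le> j' \<longrightarrow> (i', j') = (i, j))}"

text \<open>Number of sigma-patterns of X: one pattern per maximal occurrence in the signature.\<close>
definition nb :: "rexp \<Rightarrow> int list \<Rightarrow> nat" where
  "nb \<sigma> X = card (max_occ \<sigma> (signature X))"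

definition nb_constraint :: "rexp \<Rightarrow> int list \<Rightarrow> nat \<Rightarrow> bool" where
  "nb_constraint \<sigma> X R \<longleftrightarrow> R = nb \<sigma> X"

definition ground :: "int list \<Rightarrow> bool" where
  "ground X \<longleftrightarrow> X \<noteq> []"

definition maxR :: "rexp \<Rightarrow> nat \<Rightarrow> nat" where
  "maxR \<sigma> n = Max {nb \<sigma> Y | Y. length Y = n}"

definition Gap :: "rexp \<Rightarrow> int list \<Rightarrow> int" where
  "Gap \<sigma> X = int (maxR \<sigma> (length X)) - int (nb \<sigma> X)"

definition Loss :: "rexp \<Rightarrow> int list \<Rightarrow> int" where
  "Loss \<sigma> X = int (length X) -
     int (LEAST k. \<exists>Y. ground Y \<and> length Y = k \<and> nb \<sigma> Y = nb \<sigma> X)"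

definition gap_to_loss :: "rexp \<Rightarrow> bool" where
  "gap_to_loss \<sigma> \<longleftrightarrow> (\<exists>h :: int \<Rightarrow> int \<Rightarrow> nat \<Rightarrow> int.
     \<forall>X. ground X \<longrightarrow> Loss \<sigma> X = h (Gap \<sigma> X) (sgn (int (nb \<sigma> X))) (length X))"

text \<open>A deterministic finite transducer: finite state set Q, initial state q0,
  transition function delta mapping a state and input symbol to the next state
  and an output flag (True = found, False = not_found).\<close>
fun outs :: "(nat \<Rightarrow> sym \<Rightarrow> nat \<times> bool) \<Rightarrow> nat \<Rightarrow> sym list \<Rightarrow> bool list" where
  "outs \<delta> q [] = []"
| "outs \<delta> q (s # w) = snd (\<delta> q s) # outs \<delta> (fst (\<delta> q s)) w"

definition found_positions :: "(nat \<Rightarrow> sym \<Rightarrow> nat \<times> bool) \<Rightarrow> nat \<Rightarrow> sym list \<Rightarrow> nat set" where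
  "found_positions \<delta> q0 w = {k. k < length w \<and> outs \<delta> q0 w ! k}"

definition seed_transducer ::
  "rexp \<Rightarrow> nat set \<Rightarrow> nat \<Rightarrow> (nat \<Rightarrow> sym \<Rightarrow> nat \<times> bool) \<Rightarrow> bool" where
  "seed_transducer \<sigma> Q q0 \<delta> \<longleftrightarrow>
     finite Q \<and> q0 \<in> Q \<and> (\<forall>q\<in>Q. \<forall>s. fst (\<delta> q s) \<in> Q) \<and>
     (\<forall>X :: int list. \<exists>f. bij_betw f (found_positions \<delta> q0 (signature X))
                                       (max_occ \<sigma> (signature X)))"

definition found_path :: "(nat \<Rightarrow> sym \<Rightarrow> nat \<times> bool) \<Rightarrow> nat \<Rightarrow> sym list \<Rightarrow> bool" where
  "found_path \<delta> q w \<longleftrightarrow> True \<in> set (outs \<delta> q w)"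

definition homogeneous :: "rexp \<Rightarrow> nat \<Rightarrow> bool" where
  "homogeneous \<sigma> D \<longleftrightarrow> (\<exists>Q q0 \<delta>. seed_transducer \<sigma> Q q0 \<delta> \<and>
     (\<forall>q\<in>Q. \<forall>s. snd (\<delta> q s) \<longrightarrow>
        (let q' = fst (\<delta> q s) in
          (\<exists>w. found_path \<delta> q' w \<and> length w = D) \<and>
          (\<forall>w. found_path \<delta> q' w \<longrightarrow> D \<le> length w))))"

end

theory Submission
  imports Defs
begin

text \<open>In the paper homogeneity is what yields the closed form \<open>max 0 ((n - C) div D)\<close>
  for the maximum number of patterns. The shortest ground series with no pattern has
  length 1. A positive number \<open>R\<close> of patterns fits into length \<open>k\<close> exactly when
  \<open>C + R D \<le> k\<close>, and length \<open>C + R D\<close> realises exactly \<open>R\<close> patterns, so it is the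
  shortest. Comparing \<open>n - 1\<close>, resp. \<open>n - C - R D\<close>, with \<open>Gap \<cdot> D\<close> leaves the
  remainder of \<open>n - C\<close> modulo \<open>D\<close>.\<close>

lemma le_zdiv_iff_mult_le:
  fixes r x d :: int
  assumes "0 < d"
  shows "r \<le> x div d \<longleftrightarrow> r * d \<le> x"
proof
  assume "r \<le> x div d"
  then have "r * d \<le> x div d * d" using assms by simp
  also have "\<dots> \<le> x" using assms by (simp add: minus_mod_eq_div_mult [symmetric])
  finally show "r * d \<le> x" .
next
  assume "r * d \<le> x"
  then have "r * d div d \<le> x div d" using assms by (rule zdiv_mono1)
  then show "r \<le> x div d" using assms by simp
qed

lemma max0_div_mult_plus_max0_mod:
  fixes a :: int and d :: nat
  shows "max 0 (a div int d) * int d + max 0 a mod int d = max 0 a"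
proof (cases "0 \<le> a")
  case True
  then show ?thesis by (simp add: div_int_pos_iff)
next
  case False
  then have "a div int d \<le> 0" by (cases "d = 0") (simp_all add: div_nonpos_pos_le0)
  with False show ?thesis by simp
qed

lemma nb_le_length_squared: "nb \<sigma> Y \<le> length Y * length Y"
proof -
  let ?w = "signature Y"
  have "max_occ \<sigma> ?w \<subseteq> {..<length ?w} \<times> {..<length ?w}"
    by (auto simp: max_occ_def occ_def)
  then have "card (max_occ \<sigma> ?w) \<le> length ?w * length ?w"
    using card_mono [of "{..<length ?w} \<times> {..<length ?w}"] by (simp add: card_cartesian_product)
  also have "\<dots> \<le> length Y * length Y"
    by (intro mult_le_mono) (simp_all add: signature_def)
  finally show ?thesis by (simp add: nb_def)
qed

lemma finite_nb_values: "finite {nb \<sigma> Y | Y. length Y = n}"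
  by (rule finite_subset [of _ "{..n * n}"]) (use nb_le_length_squared in fastforce)+

lemma nb_le_maxR: "nb \<sigma> Y \<le> maxR \<sigma> (length Y)"
  unfolding maxR_def by (rule Max_ge [OF finite_nb_values]) auto

lemma maxR_attained: "\<exists>Y. length Y = n \<and> nb \<sigma> Y = maxR \<sigma> n"
proof -
  have "{nb \<sigma> Y | Y. length Y = n} \<noteq> {}"
    using length_replicate [of n "0::int"] by blast
  then have "maxR \<sigma> n \<in> {nb \<sigma> Y | Y. length Y = n}"
    unfolding maxR_def by (rule Max_in [OF finite_nb_values])
  then show ?thesis by auto
qed

lemma nb_eq_0_if_length_le_1: "length X \<le> 1 \<Longrightarrow> nb \<sigma> X = 0"
  by (simp add: nb_def signature_def max_occ_def occ_def)

lemma maxR_one: "maxR \<sigma> 1 = 0"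
  using maxR_attained [of 1 \<sigma>] by (auto simp: nb_eq_0_if_length_le_1)

definition shortest_length :: "rexp \<Rightarrow> nat \<Rightarrow> nat" where
  "shortest_length \<sigma> R = (LEAST k. \<exists>Y. ground Y \<and> length Y = k \<and> nb \<sigma> Y = R)"

lemma Loss_eq_shortest_length:
  "Loss \<sigma> X = int (length X) - int (shortest_length \<sigma> (nb \<sigma> X))"
  by (simp add: Loss_def shortest_length_def)

lemma shortest_length_zero: "shortest_length \<sigma> 0 = 1"
  unfolding shortest_length_def
proof (rule Least_equality)
  show "\<exists>Y. ground Y \<and> length Y = 1 \<and> nb \<sigma> Y = 0"
    using nb_eq_0_if_length_le_1 by (intro exI [of _ "[0]"]) (auto simp: ground_def)
qed (auto simp: ground_def Suc_le_eq)

locale maxR_closed_form =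
  fixes \<sigma> :: rexp and D :: nat and C :: int
  assumes maxR_eq: "1 \<le> n \<Longrightarrow> int (maxR \<sigma> n) = max 0 ((int n - C) div int D)"
begin

lemma D_pos_if_nb_pos:
  assumes "0 < nb \<sigma> X"
  shows "0 < D"
proof (rule ccontr)
  have "1 \<le> length X" using assms nb_eq_0_if_length_le_1 [of X \<sigma>] by linarith
  moreover assume "\<not> 0 < D"
  ultimately have "maxR \<sigma> (length X) = 0"
    using maxR_eq [of "length X"] by simp
  with nb_le_maxR [of \<sigma> X] assms show False by simp
qed

lemma le_maxR_iff:
  assumes "0 < D" "1 \<le> R" "1 \<le> k"
  shows "R \<le> maxR \<sigma> k \<longleftrightarrow> C + int R * int D \<le> int k"
proof -
  have "R \<le> maxR \<sigma> k \<longleftrightarrow> int R \<le> max 0 ((int k - C) div int D)"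
    using maxR_eq [OF assms(3)] by linarith
  also have "\<dots> \<longleftrightarrow> int R \<le> (int k - C) div int D"
    using assms(2) by (simp add: le_max_iff_disj)
  also have "\<dots> \<longleftrightarrow> C + int R * int D \<le> int k"
    using le_zdiv_iff_mult_le [of "int D" "int R" "int k - C"] assms(1) by linarith
  finally show ?thesis .
qed

lemma one_lt_C_plus_mult_D:
  assumes "0 < R" "0 < D"
  shows "1 < C + int R * int D"
proof -
  have "1 < C + int D"
    using le_maxR_iff [OF assms(2), of 1 1] maxR_one by auto
  moreover have "int D \<le> int R * int D"
    using assms(1) mult_right_mono [of 1 "int R" "int D"] by simp
  ultimately show ?thesis by linarith
qed

lemma shortest_length_pos:
  assumes "0 < R" "0 < D"
  shows "shortest_length \<sigma> R = nat (C + int R * int D)"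
  unfolding shortest_length_def
proof (rule Least_equality)
  let ?k = "nat (C + int R * int D)"
  have k_int: "int ?k = C + int R * int D" and k: "1 \<le> ?k"
    using one_lt_C_plus_mult_D [OF assms] by linarith+
  have "int (maxR \<sigma> ?k) = max 0 ((int ?k - C) div int D)"
    by (rule maxR_eq [OF k])
  also have "\<dots> = int R"
    unfolding k_int using assms by simp
  finally have "int (maxR \<sigma> ?k) = int R" .
  then obtain Y where "length Y = ?k" "nb \<sigma> Y = R"
    using maxR_attained [of ?k \<sigma>] by auto
  with k show "\<exists>Y. ground Y \<and> length Y = ?k \<and> nb \<sigma> Y = R"
    by (intro exI [of _ Y]) (auto simp: ground_def)
next
  fix k assume "\<exists>Y. ground Y \<and> length Y = k \<and> nb \<sigma> Y = R"
  then obtain Y where Y: "ground Y" "length Y = k" "nb \<sigma> Y = R" by blast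
  then have "1 \<le> k" by (cases Y) (auto simp: ground_def)
  moreover have "R \<le> maxR \<sigma> k" using nb_le_maxR [of \<sigma> Y] Y by simp
  ultimately show "nat (C + int R * int D) \<le> k"
    using le_maxR_iff assms by simp
qed

lemma Loss_formula:
  assumes "ground X"
  shows "Loss \<sigma> X = Gap \<sigma> X * int D
           + (1 - sgn (int (nb \<sigma> X))) * (min (int (length X)) C - 1)
           + max 0 (int (length X) - C) mod int D"
proof -
  define n where "n = length X"
  define R where "R = nb \<sigma> X"
  have n: "1 \<le> n" using assms by (cases X) (auto simp: ground_def n_def)
  have Gap: "Gap \<sigma> X = max 0 ((int n - C) div int D) - int R"
    using maxR_eq [OF n] by (simp add: Gap_def n_def R_def)
  show ?thesis
  proof (cases "R = 0")
    case True
    then have "Loss \<sigma> X = int n - 1"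
      by (simp add: Loss_eq_shortest_length shortest_length_zero n_def R_def)
    moreover have "Gap \<sigma> X * int D + max 0 (int n - C) mod int D = max 0 (int n - C)"
      using max0_div_mult_plus_max0_mod [of "int n - C" D] True by (simp add: Gap)
    moreover have "max 0 (int n - C) + (min (int n) C - 1) = int n - 1"
      by (simp add: max_def min_def)
    ultimately show ?thesis
      using True by (simp add: R_def [symmetric] n_def [symmetric])
  next
    case False
    then have D: "0 < D" using D_pos_if_nb_pos R_def by blast
    have "C + int R * int D \<le> int n"
      using le_maxR_iff [OF D _ n, of R] nb_le_maxR [of \<sigma> X] False
      by (simp add: n_def R_def)
    moreover have "int R * int D \<ge> 0" by simp
    ultimately have "0 \<le> int n - C" by linarith
    have "int R \<le> (int n - C) div int D"
      using D \<open>C + int R * int D \<le> int n\<close> by (simp add: le_zdiv_iff_mult_le)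
    moreover have "Loss \<sigma> X = int n - (C + int R * int D)"
      using shortest_length_pos [OF _ D, of R] one_lt_C_plus_mult_D [OF _ D, of R] False
      by (simp add: Loss_eq_shortest_length n_def R_def)
    ultimately show ?thesis
      using False div_mult_mod_eq [of "int n - C" "int D"] \<open>0 \<le> int n - C\<close>
      by (simp add: Gap R_def [symmetric] n_def [symmetric] algebra_simps)
  qed
qed

end

theorem theorem5:
  fixes \<sigma> :: rexp and D :: nat and C :: int
  assumes hom: "homogeneous \<sigma> D"
    and maxC: "\<forall>n::nat. n \<ge> 1 \<longrightarrow> int (maxR \<sigma> n) = max 0 ((int n - C) div int D)"
  shows "gap_to_loss \<sigma> \<and>
    (\<forall>X. ground X \<longrightarrow>
       Loss \<sigma> X = Gap \<sigma> X * int D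
         + (1 - sgn (int (nb \<sigma> X))) * (min (int (length X)) C - 1)
         + max 0 (int (length X) - C) mod int D)"
proof -
  interpret maxR_closed_form \<sigma> D C
    using maxC by unfold_locales blast
  let ?h = "\<lambda>g s n. g * int D + (1 - s) * (min (int n) C - 1) + max 0 (int n - C) mod int D"
  have "gap_to_loss \<sigma>"
    unfolding gap_to_loss_def by (rule exI [of _ ?h]) (simp add: Loss_formula)
  then show ?thesis using Loss_formula by blast
qed

end
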